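(* Let $k\ge3$ be odd and let $(w_1,w_2)$ be a weak CLT pair with $w_1,w_2\in\mathcal V_k$ and $\mathrm{wt}((w_1,w_2))=k$. Then: (i) each $w_i$ ($i=1,2$) satisfies $N^{w_i}_{\{1,1\}}=1$ and $\check w_i$ is a Wigner word of length $k$; (ii) $\mathrm{supp}(w_1)\cap\mathrm{supp}(w_2)=\{1\}$; (iii) $\mathbb{E}[\bar T_{w_1}\bar T_{w_2}]=\mathbb{E}[\xi_{11}^2]$; (iv) summing over a set of representatives of equivalence classes of all such pairs, $\sum_{(w_1,w_2)}\mathbb{E}[\bar T_{w_1}\bar T_{w_2}]=a_k^2\,\mathbb{E}[\xi_{11}^2]$.
   Context: $\{\xi_{ij}\}_{1\le i\le j}$ independent real random variables; $\{\xi_{ii}\}$ i.i.d. with mean zero, all moments finite; $\{\xi_{ij}\}_{i<j}$ i.i.d. with mean zero, $\mathbb{E}[\xi_{12}^2]=1$, all moments finite; $\xi_e=\xi_{\min(i,j),\max(i,j)}$ for $e=\{i,j\}$. A word is a finite sequence $w=(s_1,\dots,s_m)$ of positive integers; $\ell(w)=m$; closed if $s_1=s_m$; $\mathrm{supp}(w)$ its letter set; $E_w=\{\{s_i,s_{i+1}\}:1\le i\le m-1\}$ (undirected; self edge $\{u,u\}$); $N_e^w=\#\{i\le m-1:\{s_i,s_{i+1}\}=e\}$. For $a=(w_1,w_2)$: $\mathrm{wt}(a)=\#(\mathrm{supp}(w_1)\cup\mathrm{supp}(w_2))$, $E_a=E_{w_1}\cup E_{w_2}$, $N_e^a=N_e^{w_1}+N_e^{w_2}$;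 equivalence = bijection of supports mapping one to the other letter by letter. Weak CLT pair: $N_e^a\ge2$ for all $e\in E_a$ and $E_{w_1}\cap E_{w_2}\ne\emptyset$. $\mathcal V_k$ = closed words of length $k+1$ with first letter $1$ having at least one self edge. $\check w$ is obtained from $w$ by deleting each letter equal to its predecessor. A Wigner word is a closed word $w$ with $N_e^w\ge2$ for all $e\in E_w$ and $\mathrm{wt}(w)=(\ell(w)+1)/2$ (single-letter words are also Wigner words). $T_w=\prod_{e\in E_w}\xi_e^{N_e^w}$, $\bar T_w=T_w-\mathbb{E}T_w$. For odd $k$, $a_k$ is the number of equivalence classes of closed words $w$ of length $k+1$ starting at $1$ with $N^w_{\{1,1\}}=1$ and $\check w$ a Wigner word of length $k$. *)

theory Defs
  imports "HOL-Probability.Probability"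
begin

text \<open>Words are lists of positive integers (naturals >= 1).
  Edges are undirected, represented as sets of letters: the edge between u and v is {u,v};
  a self edge is {u,u} = {u}.\<close>

definition is_word :: "nat list \<Rightarrow> bool" where
  "is_word w \<longleftrightarrow> (\<forall>x\<in>set w. 0 < x)"

definition closed_word :: "nat list \<Rightarrow> bool" where
  "closed_word w \<longleftrightarrow> w \<noteq> [] \<and> hd w = last w"

definition supp :: "nat list \<Rightarrow> nat set" where
  "supp w = set w"

definition edges :: "nat list \<Rightarrow> nat set set" where
  "edges w = {{w ! i, w ! (Suc i)} | i. Suc i < length w}"

definition Nedge :: "nat set \<Rightarrow> nat list \<Rightarrow> nat" where
  "Nedge e w = card {i. Suc i < length w \<and> {w ! i, w ! (Suc i)} = e}"

definition wt_pair :: "nat list \<times> nat list \<Rightarrow> nat" where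
  "wt_pair a = card (supp (fst a) \<union> supp (snd a))"

definition edges_pair :: "nat list \<times> nat list \<Rightarrow> nat set set" where
  "edges_pair a = edges (fst a) \<union> edges (snd a)"

definition Nedge_pair :: "nat set \<Rightarrow> nat list \<times> nat list \<Rightarrow> nat" where
  "Nedge_pair e a = Nedge e (fst a) + Nedge e (snd a)"

definition word_equiv :: "nat list \<Rightarrow> nat list \<Rightarrow> bool" where
  "word_equiv w v \<longleftrightarrow> (\<exists>f. bij_betw f (supp w) (supp v) \<and> map f w = v)"

definition pair_equiv :: "nat list \<times> nat list \<Rightarrow> nat list \<times> nat list \<Rightarrow> bool" where
  "pair_equiv a b \<longleftrightarrow> (\<exists>f. bij_betw f (supp (fst a) \<union> supp (snd a)) (supp (fst b) \<union> supp (snd b))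
       \<and> map f (fst a) = fst b \<and> map f (snd a) = snd b)"

definition weak_CLT_pair :: "nat list \<times> nat list \<Rightarrow> bool" where
  "weak_CLT_pair a \<longleftrightarrow> (\<forall>e\<in>edges_pair a. 2 \<le> Nedge_pair e a)
       \<and> edges (fst a) \<inter> edges (snd a) \<noteq> {}"

definition V :: "nat \<Rightarrow> nat list set" where
  "V k = {w. is_word w \<and> closed_word w \<and> length w = k + 1 \<and> hd w = 1
             \<and> (\<exists>u. {u} \<in> edges w)}"

definition check :: "nat list \<Rightarrow> nat list" where
  "check w = remdups_adj w"

definition wigner_word :: "nat list \<Rightarrow> bool" where
  "wigner_word w \<longleftrightarrow> is_word w \<and> closed_word w \<and> (\<forall>e\<in>edges w. 2 \<le> Nedge e w)
       \<and> 2 * card (supp w) = length w + 1"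

definition a_set :: "nat \<Rightarrow> nat list set" where
  "a_set k = {w. is_word w \<and> closed_word w \<and> length w = k + 1 \<and> hd w = 1
                 \<and> Nedge {1} w = 1 \<and> wigner_word (check w) \<and> length (check w) = k}"

definition a_num :: "nat \<Rightarrow> nat" where
  "a_num k = card (a_set k // {(w, v). word_equiv w v})"

definition xi :: "(nat \<Rightarrow> nat \<Rightarrow> 'a \<Rightarrow> real) \<Rightarrow> nat set \<Rightarrow> 'a \<Rightarrow> real" where
  "xi X e = X (Min e) (Max e)"

definition T :: "(nat \<Rightarrow> nat \<Rightarrow> 'a \<Rightarrow> real) \<Rightarrow> nat list \<Rightarrow> 'a \<Rightarrow> real" where
  "T X w = (\<lambda>\<omega>. \<Prod>e\<in>edges w. xi X e \<omega> ^ Nedge e w)"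

definition Tbar :: "'a measure \<Rightarrow> (nat \<Rightarrow> nat \<Rightarrow> 'a \<Rightarrow> real) \<Rightarrow> nat list \<Rightarrow> 'a \<Rightarrow> real" where
  "Tbar M X w = (\<lambda>\<omega>. T X w \<omega> - integral\<^sup>L M (T X w))"

definition good_pair :: "nat \<Rightarrow> nat list \<times> nat list \<Rightarrow> bool" where
  "good_pair k a \<longleftrightarrow> weak_CLT_pair a \<and> fst a \<in> V k \<and> snd a \<in> V k \<and> wt_pair a = k"

end

theory Submission
  imports Defs
begin

text \<open>
  Let \<open>E\<close> be the set of edges of the pair. The two walks traverse \<open>2k\<close> edges, each at least
  twice, so \<open>|E| \<le> k\<close>; they start at the common letter \<open>1\<close> and visit \<open>k\<close> letters, so \<open>E\<close> has at
  least \<open>k - 1\<close> non-loop edges; and each word has a self edge. Hence \<open>E\<close> consists of one self edge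
  and \<open>k - 1\<close> non-loop edges, all traversed exactly twice. A non-loop edge traversed by both words
  would be a bridge of the connected graph, so every word traverses its non-loop edges twice, has
  \<open>(k+1)/2\<close> letters, and the two words meet only in \<open>1\<close>, which carries the self edge. Deleting
  that self edge leaves a Wigner word. For the expectation, \<open>\<xi>\<^sub>1\<^sub>1\<close> occurs once in each \<open>T\<^sub>w\<^sub>i\<close>,
  so both are centred, and by independence the expectation of the product factors into the second
  moment of \<open>\<xi>\<^sub>1\<^sub>1\<close> times second moments of off-diagonal entries, which are \<open>1\<close>. Finally, words meeting only in \<open>1\<close> can be renamed
  independently, so classes of pairs correspond to ordered pairs of classes counted by \<open>a\<^sub>k\<close>.
\<close>

section \<open>Edge lists of words\<close>

fun edge_list :: "nat list \<Rightarrow> nat set list" where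
  "edge_list (a # b # xs) = {a, b} # edge_list (b # xs)"
| "edge_list _ = []"

definition is_loop :: "nat set \<Rightarrow> bool" where
  "is_loop e \<longleftrightarrow> (\<exists>u. e = {u})"

definition non_loops :: "nat set set \<Rightarrow> nat set set" where
  "non_loops A = {e \<in> A. \<not> is_loop e}"

lemma non_loops_Un: "non_loops (A \<union> B) = non_loops A \<union> non_loops B"
  by (auto simp: non_loops_def)

lemma length_edge_list: "length (edge_list w) = length w - 1"
  by (induction w rule: edge_list.induct) auto

lemma nth_edge_list: "Suc i < length w \<Longrightarrow> edge_list w ! i = {w ! i, w ! Suc i}"
proof (induction w arbitrary: i rule: edge_list.induct)
  case (1 a b xs)
  then show ?case by (cases i) auto
qed auto

lemma edges_eq_set_edge_list: "edges w = set (edge_list w)"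
proof -
  have "set (edge_list w) = {edge_list w ! i | i. i < length (edge_list w)}"
    by (simp add: set_conv_nth)
  also have "\<dots> = {{w ! i, w ! Suc i} | i. Suc i < length w}"
    unfolding length_edge_list using nth_edge_list by (metis less_diff_conv Suc_eq_plus1)
  finally show ?thesis unfolding edges_def by simp
qed

lemma Nedge_eq_count_list: "Nedge e w = count_list (edge_list w) e"
  unfolding Nedge_def count_list_eq_length_filter length_filter_conv_card length_edge_list
  by (rule arg_cong[where f = card]) (auto simp: nth_edge_list)

lemma in_set_edge_listE:
  assumes "e \<in> set (edge_list w)"
  obtains a b where "e = {a, b}" "a \<in> set w" "b \<in> set w"
  using assms by (induction w rule: edge_list.induct) auto

lemma set_edge_list_subset: "e \<in> set (edge_list w) \<Longrightarrow> e \<subseteq> set w"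
  by (induction w rule: edge_list.induct) auto

lemma edge_list_map: "edge_list (map h w) = map (image h) (edge_list w)"
  by (induction w rule: edge_list.induct) auto

lemma edge_list_rev: "edge_list (rev w) = rev (edge_list w)"
proof (induction w rule: edge_list.induct)
  case (1 a b xs)
  have snoc: "edge_list (ys @ [a]) = edge_list ys @ [{last ys, a}]" if "ys \<noteq> []" for ys
    using that by (induction ys rule: edge_list.induct) auto
  have "edge_list (rev (b # xs) @ [a]) = edge_list (rev (b # xs)) @ [{b, a}]"
    by (subst snoc) (auto simp: last_rev)
  then show ?case using 1 by (simp add: insert_commute)
qed auto

lemma edge_list_check: "edge_list (check w) = filter (\<lambda>e. \<not> is_loop e) (edge_list w)"
  unfolding check_def
proof (induction w rule: remdups_adj.induct)
  case (3 x y xs)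
  have "edge_list (x # remdups_adj (y # xs)) = {x, y} # edge_list (remdups_adj (y # xs))"
    by (metis edge_list.simps(1) remdups_adj_Cons_alt)
  then show ?case using 3 by (auto simp: is_loop_def doubleton_eq_iff)
qed auto

lemma edge_list_eq_append_Cons:
  assumes "edge_list w = xs @ e # ys"
  obtains p q where "w = p @ q" "p \<noteq> []" "q \<noteq> []" "edge_list p = xs" "edge_list q = ys"
  using assms
proof (induction xs arbitrary: w thesis)
  case Nil
  then obtain a b r where "w = a # b # r" by (cases w rule: edge_list.cases) auto
  with Nil show ?case by (intro Nil.prems(1)[of "[a]" "b # r"]) auto
next
  case (Cons x xs)
  then obtain a b r where w: "w = a # b # r" by (cases w rule: edge_list.cases) auto
  with Cons.prems(2) have "edge_list (b # r) = xs @ e # ys" by simp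
  then obtain p q where pq: "b # r = p @ q" "p \<noteq> []" "q \<noteq> []" "edge_list p = xs" "edge_list q = ys"
    using Cons.IH by blast
  then obtain p' where "p = b # p'" by (cases p) auto
  then show ?case using Cons.prems w pq by (intro Cons.prems(1)[of "a # p" q]) auto
qed

lemma split_at_single_edge:
  assumes "count_list (edge_list w) e = 1"
  obtains p q where "w = p @ q" "p \<noteq> []" "q \<noteq> []" "edge_list w = edge_list p @ e # edge_list q"
    "e \<notin> set (edge_list p)" "e \<notin> set (edge_list q)"
proof -
  obtain xs ys where "edge_list w = xs @ e # ys" "e \<notin> set xs" "e \<notin> set ys"
    using count_list_Suc_split_first[of "edge_list w" e 0] assms by (auto simp: count_list_0_iff)
  with edge_list_eq_append_Cons[OF this(1)] show thesis using that by metis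
qed

lemma length_check_add_loops:
  assumes "w \<noteq> []"
  shows "length (check w) + length (filter is_loop (edge_list w)) = length w"
proof -
  have "check w \<noteq> []" using assms by (simp add: check_def)
  then have "0 < length (check w)" "0 < length w" using assms by auto
  moreover have "length (edge_list (check w)) + length (filter is_loop (edge_list w)) = length (edge_list w)"
    using sum_length_filter_compl[of is_loop "edge_list w"] by (simp add: edge_list_check)
  ultimately show ?thesis unfolding length_edge_list by arith
qed

section \<open>Counting vertices along walks\<close>

definition vertex_bound :: "nat set \<Rightarrow> nat set set \<Rightarrow> bool" where
  "vertex_bound S F \<longleftrightarrow> finite S \<and> finite F \<and> card S \<le> card F + 1 \<and> (\<forall>e\<in>F. e \<subseteq> S)"

lemma vertex_bound_singleton: "vertex_bound {x} {}"
  by (simp add: vertex_bound_def)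

lemma vertex_bound_insert_edge:
  assumes S: "vertex_bound S F" and a: "a \<in> S"
  shows "vertex_bound (insert b S) (F \<union> non_loops {{a, b}})"
proof (cases "b \<in> S")
  case True
  have "card F \<le> card (F \<union> non_loops {{a, b}})"
    using S by (intro card_mono) (auto simp: vertex_bound_def non_loops_def)
  then show ?thesis using S a True by (auto simp: vertex_bound_def non_loops_def insert_absorb)
next
  case False
  then have "a \<noteq> b" using a by auto
  then have "F \<union> non_loops {{a, b}} = insert {a, b} F"
    by (auto simp: non_loops_def is_loop_def doubleton_eq_iff)
  moreover have "{a, b} \<notin> F" using False S by (auto simp: vertex_bound_def)
  ultimately show ?thesis using S a False by (auto simp: vertex_bound_def)
qed

lemma vertex_bound_walk:
  "vertex_bound S F \<Longrightarrow> w \<noteq> [] \<Longrightarrow> hd w \<in> S \<Longrightarrow>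
    vertex_bound (S \<union> set w) (F \<union> non_loops (set (edge_list w)))"
proof (induction w arbitrary: S F rule: edge_list.induct)
  case (1 a b xs)
  have "vertex_bound (insert b S \<union> set (b # xs))
      (F \<union> non_loops {{a, b}} \<union> non_loops (set (edge_list (b # xs))))"
    using 1 vertex_bound_insert_edge by (intro "1.IH") auto
  moreover have "non_loops {{a, b}} \<union> non_loops (set (edge_list (b # xs)))
      = non_loops (set (edge_list (a # b # xs)))"
    by (auto simp: non_loops_def)
  ultimately show ?case using "1.prems"(3) by (simp add: Un_assoc insert_absorb)
next
  case ("2_2" v)
  then show ?case by (simp add: non_loops_def insert_absorb)
qed simp

text \<open>Walks from a common vertex span a connected graph, which has at most one vertex more
  than it has non-loop edges.\<close>

lemma card_walks_le_non_loops:
  assumes "\<forall>w\<in>set ws. w \<noteq> [] \<and> hd w = x"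
  shows "card (insert x (\<Union>w\<in>set ws. set w)) \<le> card (\<Union>w\<in>set ws. non_loops (set (edge_list w))) + 1"
proof -
  have "vertex_bound (insert x (\<Union>w\<in>set ws. set w)) (\<Union>w\<in>set ws. non_loops (set (edge_list w)))"
    using assms
  proof (induction ws)
    case Nil
    then show ?case using vertex_bound_singleton by simp
  next
    case (Cons w ws)
    then show ?case
      using vertex_bound_walk[OF Cons.IH, of w] by (simp add: Un_ac)
  qed
  then show ?thesis by (simp add: vertex_bound_def)
qed

lemma card_eq_non_loops_add_loops:
  "finite E \<Longrightarrow> card E = card (non_loops E) + card {e \<in> E. is_loop e}"
  unfolding non_loops_def
  by (subst card_Un_disjoint[symmetric]) (auto intro!: arg_cong[where f = card])

section \<open>The words counted by \<open>a_k\<close>\<close>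

definition single_loop_word :: "nat list \<Rightarrow> bool" where
  "single_loop_word w \<longleftrightarrow> count_list (edge_list w) {1} = 1
     \<and> (\<forall>e\<in>set (edge_list w). is_loop e \<longrightarrow> e = {1})
     \<and> (\<forall>e\<in>set (edge_list w). \<not> is_loop e \<longrightarrow> 2 \<le> count_list (edge_list w) e)
     \<and> 2 * card (set w) = length w"

lemma count_list_filter: "P x \<Longrightarrow> count_list (filter P xs) x = count_list xs x"
  by (induction xs) auto

lemma wigner_word_check_iff:
  assumes "is_word w" "closed_word w" "length (check w) + 1 = length w"
  shows "wigner_word (check w) \<longleftrightarrow>
    (\<forall>e\<in>set (edge_list w). \<not> is_loop e \<longrightarrow> 2 \<le> count_list (edge_list w) e) \<and> 2 * card (set w) = length w"
proof -
  have "w \<noteq> []" using assms(2) by (simp add: closed_word_def)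
  then have "is_word (check w) \<and> closed_word (check w)"
    using assms(1,2) by (simp add: is_word_def closed_word_def check_def)
  moreover have "(\<forall>e\<in>edges (check w). 2 \<le> Nedge e (check w)) \<longleftrightarrow>
      (\<forall>e\<in>set (edge_list w). \<not> is_loop e \<longrightarrow> 2 \<le> count_list (edge_list w) e)"
    by (auto simp: edges_eq_set_edge_list Nedge_eq_count_list edge_list_check count_list_filter)
  moreover have "supp (check w) = set w" by (simp add: supp_def check_def)
  ultimately show ?thesis using assms(3) by (auto simp: wigner_word_def)
qed

lemma single_loop_filter_loops:
  assumes "count_list (edge_list w) {1} = 1"
  shows "(\<forall>e\<in>set (edge_list w). is_loop e \<longrightarrow> e = {1}) \<longleftrightarrow> length (filter is_loop (edge_list w)) = 1"
proof
  assume "\<forall>e\<in>set (edge_list w). is_loop e \<longrightarrow> e = {1}"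
  then have "filter is_loop (edge_list w) = filter ((=) {1}) (edge_list w)"
    by (intro filter_cong) (auto simp: is_loop_def)
  then show "length (filter is_loop (edge_list w)) = 1"
    using assms by (simp add: count_list_eq_length_filter)
next
  assume "length (filter is_loop (edge_list w)) = 1"
  then obtain l where l: "filter is_loop (edge_list w) = [l]" by (auto simp: length_Suc_conv)
  have "{1} \<in> set (filter is_loop (edge_list w))"
    using assms count_notin[of "{1}" "edge_list w"] by (auto simp: is_loop_def)
  show "\<forall>e\<in>set (edge_list w). is_loop e \<longrightarrow> e = {1}"
  proof (intro ballI impI)
    fix e assume "e \<in> set (edge_list w)" "is_loop e"
    then have "e \<in> set (filter is_loop (edge_list w))" by simp
    with l \<open>{1} \<in> set (filter is_loop (edge_list w))\<close> show "e = {1}" by simp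
  qed
qed

lemma a_set_iff:
  "w \<in> a_set k \<longleftrightarrow> is_word w \<and> closed_word w \<and> length w = k + 1 \<and> hd w = 1 \<and> single_loop_word w"
proof (cases "is_word w \<and> closed_word w \<and> length w = k + 1 \<and> count_list (edge_list w) {1} = 1")
  case True
  then have "w \<noteq> []" by (simp add: closed_word_def)
  then have "length (check w) = k \<longleftrightarrow> length (filter is_loop (edge_list w)) = 1"
    using length_check_add_loops[of w] True by auto
  then show ?thesis
    using True single_loop_filter_loops[of w] wigner_word_check_iff[of w]
    by (auto simp: a_set_def single_loop_word_def Nedge_eq_count_list)
qed (auto simp: a_set_def single_loop_word_def Nedge_eq_count_list)

lemma is_loop_image:
  assumes "inj_on h e" "finite e"
  shows "is_loop (h ` e) \<longleftrightarrow> is_loop e"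
  using assms card_image[OF assms(1)] by (simp add: is_loop_def flip: card_1_singleton_iff)

lemma a_set_map:
  assumes v: "v \<in> a_set k" and h: "inj_on h (set v)" "h 1 = 1" "\<forall>x\<in>set v. 0 < h x"
  shows "map h v \<in> a_set k"
proof -
  have v': "is_word v" "closed_word v" "length v = k + 1" "hd v = 1" "single_loop_word v"
    using v by (simp_all add: a_set_iff)
  have inj_edges: "inj_on (image h) (set (edge_list v))"
    by (rule inj_on_image, rule inj_on_subset[OF h(1)]) (use set_edge_list_subset in blast)
  have loop_iff: "is_loop (h ` e) \<longleftrightarrow> is_loop e" if "e \<in> set (edge_list v)" for e
    using set_edge_list_subset[OF that]
    by (intro is_loop_image inj_on_subset[OF h(1)]) (auto intro: finite_subset)
  have count: "count_list (edge_list (map h v)) (h ` e) = count_list (edge_list v) e"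
    if "e \<in> set (edge_list v)" for e
    using count_list_inj_map[OF inj_edges that] by (simp add: edge_list_map)
  have one: "{1} \<in> set (edge_list v)"
    using v'(5) unfolding single_loop_word_def by (metis count_notin zero_neq_one)
  have "single_loop_word (map h v)"
    unfolding single_loop_word_def
  proof (intro conjI ballI impI)
    show "count_list (edge_list (map h v)) {1} = 1"
      using count[OF one] v'(5) h(2) by (simp add: single_loop_word_def)
    fix e' assume "e' \<in> set (edge_list (map h v))"
    then obtain e where e: "e \<in> set (edge_list v)" "e' = h ` e" by (auto simp: edge_list_map)
    show "e' = {1}" if "is_loop e'"
      using that e loop_iff v'(5) h(2) by (auto simp: single_loop_word_def)
    show "2 \<le> count_list (edge_list (map h v)) e'" if "\<not> is_loop e'"
      using that e loop_iff count v'(5) by (auto simp: single_loop_word_def)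
  next
    show "2 * card (set (map h v)) = length (map h v)"
      using v'(5) h(1) by (simp add: single_loop_word_def card_image)
  qed
  moreover have "is_word (map h v)" "closed_word (map h v)" "hd (map h v) = 1"
    using v' h by (auto simp: is_word_def closed_word_def hd_map last_map)
  ultimately show ?thesis using v'(3) by (simp add: a_set_iff)
qed

section \<open>Structure of the pairs\<close>

lemma V_memD:
  assumes "w \<in> V k"
  shows "is_word w" "w \<noteq> []" "hd w = 1" "last w = 1" "length w = k + 1"
    "length (edge_list w) = k" "\<exists>u. {u} \<in> set (edge_list w)"
  using assms by (auto simp: V_def closed_word_def length_edge_list edges_eq_set_edge_list)

lemma sum_eq_const_if_ge:
  fixes f :: "'a \<Rightarrow> nat"
  assumes "finite A" "\<forall>x\<in>A. c \<le> f x" "sum f A \<le> c * card A"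
  shows "\<forall>x\<in>A. f x = c"
proof (rule ccontr)
  assume "\<not> ?thesis"
  then obtain a where "a \<in> A" "c < f a" using assms(2) by force
  then have "sum (\<lambda>_. c) A < sum f A" using assms by (intro sum_strict_mono_ex1) auto
  then show False using assms(3) by (simp add: mult.commute)
qed

lemma good_pair_edge_census:
  fixes w1 w2 :: "nat list"
  defines "E \<equiv> set (edge_list w1) \<union> set (edge_list w2)"
    and "N \<equiv> \<lambda>e. count_list (edge_list w1) e + count_list (edge_list w2) e"
  assumes g: "good_pair k (w1, w2)"
  obtains u where "{e \<in> E. is_loop e} = {{u}}" "card (non_loops E) = k - 1" "\<forall>e\<in>E. N e = 2"
proof -
  have w1: "w1 \<in> V k" and w2: "w2 \<in> V k" and wt: "card (set w1 \<union> set w2) = k"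
    using g by (auto simp: good_pair_def wt_pair_def supp_def)
  have N2: "\<forall>e\<in>E. 2 \<le> N e"
    using g by (auto simp: good_pair_def weak_CLT_pair_def edges_pair_def Nedge_pair_def E_def N_def
        edges_eq_set_edge_list Nedge_eq_count_list)
  have finE: "finite E" by (simp add: E_def)
  have sumN: "sum N E = 2 * k"
    using V_memD(6)[OF w1] V_memD(6)[OF w2] finE
    by (simp add: N_def sum.distrib sum_count_set E_def)
  then have cardE: "card E \<le> k"
    using sum_mono[of E "\<lambda>_. 2" N] N2 by simp
  have "1 \<in> set w1" using V_memD(2,3)[OF w1] by (metis hd_in_set)
  then have non_loops_ge: "k \<le> card (non_loops E) + 1"
    using card_walks_le_non_loops[of "[w1, w2]" 1] V_memD[OF w1] V_memD[OF w2] wt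
    by (simp add: E_def non_loops_Un insert_absorb)
  obtain u where "{u} \<in> set (edge_list w1)" using V_memD(7)[OF w1] by blast
  then have u: "{u} \<in> {e \<in> E. is_loop e}" by (simp add: E_def is_loop_def)
  then have "card {e \<in> E. is_loop e} \<ge> 1"
    using finE card_gt_0_iff[of "{e \<in> E. is_loop e}"] by force
  with cardE non_loops_ge card_eq_non_loops_add_loops[OF finE]
  have loops: "card {e \<in> E. is_loop e} = 1" and "card (non_loops E) = k - 1" "card E = k"
    by linarith+
  moreover have "{e \<in> E. is_loop e} = {{u}}"
    using loops u by (metis card_1_singletonE singletonD)
  moreover have "\<forall>e\<in>E. N e = 2"
    using sum_eq_const_if_ge[OF finE N2] sumN \<open>card E = k\<close> by simp
  ultimately show thesis by (intro that)
qed

text \<open>An edge traversed once by each word would be a bridge: cutting both closed walks at it leaves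
  four walks from \<open>1\<close> that still visit all \<open>k\<close> letters but use only \<open>k - 2\<close> non-loop edges.\<close>

lemma good_pair_non_loop_unshared:
  assumes g: "good_pair k (w1, w2)" and e: "\<not> is_loop e" "e \<in> set (edge_list w1)"
  shows "e \<notin> set (edge_list w2)"
proof
  assume e2: "e \<in> set (edge_list w2)"
  define E where "E = set (edge_list w1) \<union> set (edge_list w2)"
  have nl: "card (non_loops E) = k - 1"
    and N: "\<forall>e\<in>E. count_list (edge_list w1) e + count_list (edge_list w2) e = 2"
    using good_pair_edge_census[OF g] unfolding E_def by metis+
  have w1: "w1 \<in> V k" and w2: "w2 \<in> V k" and wt: "card (set w1 \<union> set w2) = k"
    using g by (auto simp: good_pair_def wt_pair_def supp_def)
  have "count_list (edge_list w1) e \<noteq> 0" "count_list (edge_list w2) e \<noteq> 0"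
    using e e2 by (simp_all add: count_list_0_iff)
  moreover have "count_list (edge_list w1) e + count_list (edge_list w2) e = 2"
    using N e by (simp add: E_def)
  ultimately have "count_list (edge_list w1) e = 1" "count_list (edge_list w2) e = 1"
    by linarith+
  then obtain p1 q1 p2 q2 where
      pq1: "w1 = p1 @ q1" "p1 \<noteq> []" "q1 \<noteq> []" "edge_list w1 = edge_list p1 @ e # edge_list q1"
        "e \<notin> set (edge_list p1)" "e \<notin> set (edge_list q1)" and
      pq2: "w2 = p2 @ q2" "p2 \<noteq> []" "q2 \<noteq> []" "edge_list w2 = edge_list p2 @ e # edge_list q2"
        "e \<notin> set (edge_list p2)" "e \<notin> set (edge_list q2)"
    by (metis split_at_single_edge)
  define ws where "ws = [p1, rev q1, p2, rev q2]"
  have "\<forall>w\<in>set ws. w \<noteq> [] \<and> hd w = 1"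
    using pq1 pq2 V_memD(3,4)[OF w1] V_memD(3,4)[OF w2] by (auto simp: ws_def hd_rev)
  then have "card (insert 1 (\<Union>w\<in>set ws. set w)) \<le> card (\<Union>w\<in>set ws. non_loops (set (edge_list w))) + 1"
    by (rule card_walks_le_non_loops)
  moreover have "insert 1 (\<Union>w\<in>set ws. set w) = set w1 \<union> set w2"
    using pq1 pq2 V_memD(2,3)[OF w1] by (auto simp: ws_def) (metis hd_append2 hd_in_set)
  moreover have "card (\<Union>w\<in>set ws. non_loops (set (edge_list w))) \<le> k - 2"
  proof -
    have fin: "finite (non_loops E)" by (simp add: E_def non_loops_def)
    have "e \<in> non_loops E" using e by (simp add: E_def non_loops_def)
    then have "card (non_loops E - {e}) = k - 2" using fin nl by simp
    moreover have "(\<Union>w\<in>set ws. non_loops (set (edge_list w))) \<subseteq> non_loops E - {e}"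
      using pq1 pq2 by (auto simp: ws_def edge_list_rev non_loops_def E_def)
    ultimately show ?thesis using card_mono[of "non_loops E - {e}"] fin by auto
  qed
  ultimately have "k \<le> k - 2 + 1" using wt by simp
  moreover have "k \<ge> 2"
    using nl e card_gt_0_iff[of "non_loops E"] by (auto simp: E_def non_loops_def)
  ultimately show False by linarith
qed

lemma length_eq_count_loop_add_non_loops:
  assumes "is_loop l" "\<forall>e\<in>set xs. is_loop e \<longrightarrow> e = l"
    and "\<forall>e\<in>set xs. \<not> is_loop e \<longrightarrow> count_list xs e = 2"
  shows "length xs = count_list xs l + 2 * card (non_loops (set xs))"
proof -
  have "length xs = sum (count_list xs) (insert l (non_loops (set xs)))"
    using assms(2) by (intro sum_count_set[symmetric]) (auto simp: non_loops_def)
  also have "\<dots> = count_list xs l + sum (count_list xs) (non_loops (set xs))"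
    using assms(1) by (simp add: non_loops_def)
  also have "sum (count_list xs) (non_loops (set xs)) = 2 * card (non_loops (set xs))"
    using assms(3) by (simp add: non_loops_def)
  finally show ?thesis .
qed

lemma good_pair_edge_counts:
  assumes g: "good_pair k (w1, w2)"
  obtains u where "\<forall>e\<in>set (edge_list w1) \<union> set (edge_list w2). is_loop e \<longrightarrow> e = {u}"
    "count_list (edge_list w1) {u} = 1" "count_list (edge_list w2) {u} = 1"
    "\<forall>e\<in>set (edge_list w1). \<not> is_loop e \<longrightarrow> count_list (edge_list w1) e = 2"
    "\<forall>e\<in>set (edge_list w2). \<not> is_loop e \<longrightarrow> count_list (edge_list w2) e = 2"
proof -
  obtain u where loops: "{e \<in> set (edge_list w1) \<union> set (edge_list w2). is_loop e} = {{u}}"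
    and N: "\<forall>e\<in>set (edge_list w1) \<union> set (edge_list w2).
      count_list (edge_list w1) e + count_list (edge_list w2) e = 2"
    using good_pair_edge_census[OF g] by metis
  have loop_u: "\<forall>e\<in>set (edge_list w1) \<union> set (edge_list w2). is_loop e \<longrightarrow> e = {u}"
    using loops by blast
  have "w1 \<in> V k" "w2 \<in> V k" using g by (auto simp: good_pair_def)
  then obtain u1 u2 where "{u1} \<in> set (edge_list w1)" "{u2} \<in> set (edge_list w2)"
    using V_memD(7) by metis
  then have "{u1} = {u}" "{u2} = {u}" using loop_u unfolding is_loop_def by blast+
  with \<open>{u1} \<in> set (edge_list w1)\<close> \<open>{u2} \<in> set (edge_list w2)\<close>
  have "{u} \<in> set (edge_list w1)" "{u} \<in> set (edge_list w2)" by simp_all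
  then have "count_list (edge_list w1) {u} \<noteq> 0" "count_list (edge_list w2) {u} \<noteq> 0"
    and "count_list (edge_list w1) {u} + count_list (edge_list w2) {u} = 2"
    using N by (simp_all add: count_list_0_iff)
  then have "count_list (edge_list w1) {u} = 1" "count_list (edge_list w2) {u} = 1"
    by linarith+
  moreover have "count_list (edge_list w1) e = 2"
    if "e \<in> set (edge_list w1)" "\<not> is_loop e" for e
    using good_pair_non_loop_unshared[OF g that(2,1)] N that(1) by (metis UnI1 add_0_right count_notin)
  moreover have "count_list (edge_list w2) e = 2"
    if "e \<in> set (edge_list w2)" "\<not> is_loop e" for e
    using good_pair_non_loop_unshared[OF g that(2)] N that(1) by (metis UnI2 add_0 count_notin)
  ultimately show thesis using loop_u by (intro that) auto
qed

text \<open>Both edge lists then have length \<open>k = 1 + 2 n\<^sub>i\<close> with \<open>n\<^sub>i\<close> non-loop edges spanning at most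
  \<open>n\<^sub>i + 1\<close> letters; as the two words cover \<open>k\<close> letters and share \<open>1\<close>, all these bounds are tight.\<close>

lemma good_pair_letters:
  assumes g: "good_pair k (w1, w2)"
  shows "set w1 \<inter> set w2 = {1}" "2 * card (set w1) = k + 1" "2 * card (set w2) = k + 1"
proof -
  have w1: "w1 \<in> V k" and w2: "w2 \<in> V k" and wt: "card (set w1 \<union> set w2) = k"
    using g by (auto simp: good_pair_def wt_pair_def supp_def)
  obtain u where loops: "\<forall>e\<in>set (edge_list w1) \<union> set (edge_list w2). is_loop e \<longrightarrow> e = {u}"
    and u1: "count_list (edge_list w1) {u} = 1" and u2: "count_list (edge_list w2) {u} = 1"
    and two1: "\<forall>e\<in>set (edge_list w1). \<not> is_loop e \<longrightarrow> count_list (edge_list w1) e = 2"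
    and two2: "\<forall>e\<in>set (edge_list w2). \<not> is_loop e \<longrightarrow> count_list (edge_list w2) e = 2"
    by (rule good_pair_edge_counts[OF g])
  have loop_u: "is_loop {u}" by (simp add: is_loop_def)
  have "k = 1 + 2 * card (non_loops (set (edge_list w1)))"
    using length_eq_count_loop_add_non_loops[OF loop_u _ two1] loops u1 V_memD(6)[OF w1] by simp
  moreover have "k = 1 + 2 * card (non_loops (set (edge_list w2)))"
    using length_eq_count_loop_add_non_loops[OF loop_u _ two2] loops u2 V_memD(6)[OF w2] by simp
  moreover have one: "1 \<in> set w1" "1 \<in> set w2"
    using V_memD(2,3)[OF w1] V_memD(2,3)[OF w2] by (metis hd_in_set)+
  moreover have "card (set w1) \<le> card (non_loops (set (edge_list w1))) + 1"
    "card (set w2) \<le> card (non_loops (set (edge_list w2))) + 1"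
    using card_walks_le_non_loops[of "[w1]" 1] card_walks_le_non_loops[of "[w2]" 1] one
      V_memD(2,3)[OF w1] V_memD(2,3)[OF w2] by (simp_all add: insert_absorb)
  moreover have "card (set w1) + card (set w2) = k + card (set w1 \<inter> set w2)"
    using card_Un_Int[of "set w1" "set w2"] wt by simp
  moreover have "card (set w1 \<inter> set w2) \<ge> 1"
    using one card_gt_0_iff[of "set w1 \<inter> set w2"] by auto
  ultimately have "card (set w1 \<inter> set w2) = 1"
    and "2 * card (set w1) = k + 1" "2 * card (set w2) = k + 1"
    by linarith+
  then show "set w1 \<inter> set w2 = {1}" "2 * card (set w1) = k + 1" "2 * card (set w2) = k + 1"
    using one by (metis IntI card_1_singletonE singletonD)+
qed

lemma good_pair_structure:
  assumes g: "good_pair k (w1, w2)"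
  shows "single_loop_word w1" "single_loop_word w2" "set w1 \<inter> set w2 = {1}"
    and "\<forall>e\<in>edges w1 \<union> edges w2. is_loop e \<longrightarrow> e = {1}"
    and "\<forall>e\<in>edges w1 \<union> edges w2. Nedge e w1 + Nedge e w2 = 2"
proof -
  obtain u where loops: "\<forall>e\<in>set (edge_list w1) \<union> set (edge_list w2). is_loop e \<longrightarrow> e = {u}"
    and u1: "count_list (edge_list w1) {u} = 1" and u2: "count_list (edge_list w2) {u} = 1"
    and "\<forall>e\<in>set (edge_list w1). \<not> is_loop e \<longrightarrow> count_list (edge_list w1) e = 2"
    and "\<forall>e\<in>set (edge_list w2). \<not> is_loop e \<longrightarrow> count_list (edge_list w2) e = 2"
    by (rule good_pair_edge_counts[OF g])
  moreover note letters = good_pair_letters[OF g]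
  moreover have "{u} \<in> set (edge_list w1)" "{u} \<in> set (edge_list w2)"
    using u1 u2 by (metis count_notin zero_neq_one)+
  then have "u \<in> set w1 \<inter> set w2" using set_edge_list_subset by blast
  then have "u = 1" using letters(1) by blast
  moreover have "length w1 = k + 1" "length w2 = k + 1"
    using g by (auto simp: good_pair_def V_def)
  ultimately show "single_loop_word w1" "single_loop_word w2"
    by (auto simp: single_loop_word_def)
  show "set w1 \<inter> set w2 = {1}" by (rule letters(1))
  show "\<forall>e\<in>edges w1 \<union> edges w2. is_loop e \<longrightarrow> e = {1}"
    using \<open>u = 1\<close> loops by (simp add: edges_eq_set_edge_list)
  have "\<forall>e\<in>set (edge_list w1) \<union> set (edge_list w2).
      count_list (edge_list w1) e + count_list (edge_list w2) e = 2"
    using good_pair_edge_census[OF g] by metis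
  then show "\<forall>e\<in>edges w1 \<union> edges w2. Nedge e w1 + Nedge e w2 = 2"
    by (simp add: edges_eq_set_edge_list Nedge_eq_count_list)
qed

section \<open>Expectations\<close>

lemma Min_Max_doubleton: "{Min {a, b :: nat}, Max {a, b}} = {a, b}"
  by (cases "a \<le> b") (auto simp: max_def min_def)

lemma edges_of_word: "is_word w \<Longrightarrow> e \<in> edges w \<Longrightarrow> \<exists>a b. e = {a, b} \<and> 0 < a \<and> 0 < b"
  by (auto simp: is_word_def edges_eq_set_edge_list elim!: in_set_edge_listE)

lemma T_mult_T:
  "T X w1 \<omega> * T X w2 \<omega> = (\<Prod>e\<in>edges w1 \<union> edges w2. xi X e \<omega> ^ (Nedge e w1 + Nedge e w2))"
proof -
  have T_eq: "T X w \<omega> = (\<Prod>e\<in>edges w1 \<union> edges w2. xi X e \<omega> ^ Nedge e w)"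
    if "edges w \<subseteq> edges w1 \<union> edges w2" for w
    unfolding T_def using that
    by (intro prod.mono_neutral_left) (auto simp: edges_eq_set_edge_list Nedge_eq_count_list)
  show ?thesis
    using T_eq[of w1] T_eq[of w2] by (simp add: power_add prod.distrib)
qed

locale wigner_entries = prob_space M for M :: "'a measure" +
  fixes X :: "nat \<Rightarrow> nat \<Rightarrow> 'a \<Rightarrow> real"
  assumes indep: "indep_vars (\<lambda>_. borel) (\<lambda>(i, j). X i j) {(i, j). 1 \<le> i \<and> i \<le> j}"
    and distr_off_diagonal: "\<And>i j. 1 \<le> i \<Longrightarrow> i < j \<Longrightarrow> distr M borel (X i j) = distr M borel (X 1 2)"
    and integral_X: "\<And>i j. 1 \<le> i \<Longrightarrow> i \<le> j \<Longrightarrow> integral\<^sup>L M (X i j) = 0"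
    and integral_X12_square: "integral\<^sup>L M (\<lambda>\<omega>. (X 1 2 \<omega>)\<^sup>2) = 1"
    and integrable_abs_power: "\<And>i j n. 1 \<le> i \<Longrightarrow> i \<le> j \<Longrightarrow> integrable M (\<lambda>\<omega>. \<bar>X i j \<omega>\<bar> ^ n)"
begin

lemma measurable_X: "1 \<le> i \<Longrightarrow> i \<le> j \<Longrightarrow> X i j \<in> borel_measurable M"
  using indep by (auto simp: indep_vars_def)

lemma integrable_power: "1 \<le> i \<Longrightarrow> i \<le> j \<Longrightarrow> integrable M (\<lambda>\<omega>. X i j \<omega> ^ n)"
  using integrable_abs_power[of i j n] integrable_abs_iff[of "\<lambda>\<omega>. X i j \<omega> ^ n" M] measurable_X
  by (simp add: power_abs)

lemma integral_xi_square:
  assumes "0 < a" "0 < b" "a \<noteq> b"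
  shows "integral\<^sup>L M (\<lambda>\<omega>. xi X {a, b} \<omega> ^ 2) = 1"
proof -
  define i j where "i = Min {a, b}" and "j = Max {a, b}"
  have ij: "1 \<le> i" "i < j" using assms by (auto simp: i_def j_def min_def max_def)
  have "integral\<^sup>L M (\<lambda>\<omega>. X i j \<omega> ^ 2) = integral\<^sup>L (distr M borel (X i j)) (\<lambda>x. x ^ 2)"
    using measurable_X[of i j] ij by (simp add: integral_distr)
  also have "\<dots> = integral\<^sup>L (distr M borel (X 1 2)) (\<lambda>x. x ^ 2)"
    by (simp only: distr_off_diagonal[OF ij])
  also have "\<dots> = 1"
    using measurable_X[of 1 2] integral_X12_square by (simp add: integral_distr)
  finally show ?thesis by (simp add: xi_def i_def j_def)
qed

lemma integral_prod_xi_power: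
  assumes "finite A" and A: "\<And>e. e \<in> A \<Longrightarrow> \<exists>a b. e = {a, b} \<and> 0 < a \<and> 0 < b"
  shows "integral\<^sup>L M (\<lambda>\<omega>. \<Prod>e\<in>A. xi X e \<omega> ^ n e) = (\<Prod>e\<in>A. integral\<^sup>L M (\<lambda>\<omega>. xi X e \<omega> ^ n e))"
proof -
  define idx where "idx e = (Min e, Max e)" for e :: "nat set"
  define Y where "Y p = (\<lambda>x. x ^ n {fst p, snd p}) \<circ> (\<lambda>(i, j). X i j) p" for p
  have edge_idx: "{fst (idx e), snd (idx e)} = e" if "e \<in> A" for e
    using A[OF that] by (auto simp: idx_def Min_Max_doubleton)
  then have inj: "inj_on idx A" by (metis inj_onI)
  have idx_entries: "idx ` A \<subseteq> {(i, j). 1 \<le> i \<and> i \<le> j}"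
    using A by (force simp: idx_def min_def max_def)
  have Y_idx: "Y (idx e) = (\<lambda>\<omega>. xi X e \<omega> ^ n e)" if "e \<in> A" for e
    using edge_idx[OF that] by (auto simp: Y_def xi_def idx_def)
  have "indep_vars (\<lambda>_. borel) Y (idx ` A)"
    unfolding Y_def by (rule indep_vars_compose[OF indep_vars_subset[OF indep idx_entries]]) auto
  moreover have "integrable M (Y p)" if "p \<in> idx ` A" for p
    using that idx_entries integrable_power by (auto simp: Y_def comp_def)
  ultimately have "integral\<^sup>L M (\<lambda>\<omega>. \<Prod>p\<in>idx ` A. Y p \<omega>) = (\<Prod>p\<in>idx ` A. integral\<^sup>L M (Y p))"
    using assms(1) by (intro indep_vars_lebesgue_integral) auto
  then show ?thesis
    using inj Y_idx by (simp add: prod.reindex cong: prod.cong)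
qed

lemma integral_T_eq_0:
  assumes w: "is_word w" and once: "Nedge e w = 1"
  shows "integral\<^sup>L M (T X w) = 0"
proof -
  have e: "e \<in> edges w"
    using once by (metis Nedge_eq_count_list count_notin edges_eq_set_edge_list zero_neq_one)
  then obtain a b where ab: "e = {a, b}" "0 < a" "0 < b" using edges_of_word[OF w] by blast
  then have "integral\<^sup>L M (\<lambda>\<omega>. xi X e \<omega> ^ Nedge e w) = 0"
    using once integral_X[of "Min e" "Max e"] by (simp add: xi_def)
  then have "(\<Prod>e\<in>edges w. integral\<^sup>L M (\<lambda>\<omega>. xi X e \<omega> ^ Nedge e w)) = 0"
    using e by (intro prod_zero) (auto simp: edges_eq_set_edge_list)
  moreover have "finite (edges w)" by (simp add: edges_eq_set_edge_list)
  ultimately show ?thesis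
    unfolding T_def using integral_prod_xi_power edges_of_word[OF w] by simp
qed

lemma integral_Tbar_mult_Tbar:
  assumes w: "is_word w1" "is_word w2" and once: "Nedge {1} w1 = 1" "Nedge {1} w2 = 1"
    and loops: "\<forall>e\<in>edges w1 \<union> edges w2. is_loop e \<longrightarrow> e = {1}"
    and twice: "\<forall>e\<in>edges w1 \<union> edges w2. Nedge e w1 + Nedge e w2 = 2"
  shows "integral\<^sup>L M (\<lambda>\<omega>. Tbar M X w1 \<omega> * Tbar M X w2 \<omega>) = integral\<^sup>L M (\<lambda>\<omega>. (X 1 1 \<omega>)\<^sup>2)"
proof -
  define E where "E = edges w1 \<union> edges w2"
  have finE: "finite E" by (simp add: E_def edges_eq_set_edge_list)
  have E: "\<exists>a b. e = {a, b} \<and> 0 < a \<and> 0 < b" if "e \<in> E" for e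
    using that edges_of_word w by (auto simp: E_def)
  have "{1} \<in> E"
    using once(1) by (metis E_def Nedge_eq_count_list UnI1 count_notin edges_eq_set_edge_list zero_neq_one)
  have factor: "integral\<^sup>L M (\<lambda>\<omega>. xi X e \<omega> ^ 2) = 1" if e: "e \<in> E - {{1}}" for e
  proof -
    obtain a b where "e = {a, b}" "0 < a" "0 < b" using E e by blast
    moreover have "a \<noteq> b" using loops e calculation(1) by (auto simp: E_def is_loop_def)
    ultimately show ?thesis by (simp add: integral_xi_square)
  qed
  have "Tbar M X w1 = T X w1" "Tbar M X w2 = T X w2"
    using integral_T_eq_0[OF w(1) once(1)] integral_T_eq_0[OF w(2) once(2)] by (simp_all add: Tbar_def)
  moreover have "T X w1 \<omega> * T X w2 \<omega> = (\<Prod>e\<in>E. xi X e \<omega> ^ 2)" for \<omega>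
    unfolding T_mult_T E_def using twice by (intro prod.cong) auto
  ultimately have "integral\<^sup>L M (\<lambda>\<omega>. Tbar M X w1 \<omega> * Tbar M X w2 \<omega>)
      = integral\<^sup>L M (\<lambda>\<omega>. \<Prod>e\<in>E. xi X e \<omega> ^ 2)"
    by simp
  also have "\<dots> = (\<Prod>e\<in>E. integral\<^sup>L M (\<lambda>\<omega>. xi X e \<omega> ^ 2))"
    by (rule integral_prod_xi_power[OF finE E])
  also have "\<dots> = integral\<^sup>L M (\<lambda>\<omega>. xi X {1} \<omega> ^ 2)
      * (\<Prod>e\<in>E - {{1}}. integral\<^sup>L M (\<lambda>\<omega>. xi X e \<omega> ^ 2))"
    by (rule prod.remove[OF finE \<open>{1} \<in> E\<close>])
  also have "(\<Prod>e\<in>E - {{1}}. integral\<^sup>L M (\<lambda>\<omega>. xi X e \<omega> ^ 2)) = 1"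
    using factor by (intro prod.neutral) blast
  finally show ?thesis by (simp add: xi_def)
qed

lemma integral_Tbar_mult_Tbar_good_pair:
  assumes g: "good_pair k (w1, w2)"
  shows "integral\<^sup>L M (\<lambda>\<omega>. Tbar M X w1 \<omega> * Tbar M X w2 \<omega>) = integral\<^sup>L M (\<lambda>\<omega>. (X 1 1 \<omega>)\<^sup>2)"
proof (rule integral_Tbar_mult_Tbar)
  show "is_word w1" "is_word w2" using g by (auto simp: good_pair_def V_def)
  show "Nedge {1} w1 = 1" "Nedge {1} w2 = 1"
    using good_pair_structure(1,2)[OF g] by (simp_all add: single_loop_word_def Nedge_eq_count_list)
qed (use good_pair_structure(4,5)[OF g] in auto)

end

section \<open>Counting equivalence classes\<close>

lemma word_equiv_refl: "word_equiv w w"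
  unfolding word_equiv_def by (intro exI[of _ id]) auto

lemma word_equiv_sym:
  assumes "word_equiv w v"
  shows "word_equiv v w"
proof -
  obtain f where f: "bij_betw f (supp w) (supp v)" "map f w = v"
    using assms by (auto simp: word_equiv_def)
  define g where "g = the_inv_into (supp w) f"
  have "map g v = w"
    using f by (auto simp: g_def supp_def bij_betw_def the_inv_into_f_f intro!: map_idI)
  moreover have "bij_betw g (supp v) (supp w)"
    unfolding g_def using f(1) by (rule bij_betw_the_inv_into)
  ultimately show ?thesis unfolding word_equiv_def by blast
qed

lemma word_equiv_trans:
  assumes "word_equiv w v" "word_equiv v x"
  shows "word_equiv w x"
proof -
  obtain f g where "bij_betw f (supp w) (supp v)" "map f w = v" "bij_betw g (supp v) (supp x)" "map g v = x"
    using assms by (auto simp: word_equiv_def)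
  then show ?thesis
    unfolding word_equiv_def by (intro exI[of _ "g \<circ> f"]) (auto intro: bij_betw_trans)
qed

lemma equiv_word_equiv: "equiv UNIV {(w, v). word_equiv w v}"
  by (rule equivI) (auto intro: refl_onI symI transI word_equiv_refl word_equiv_sym word_equiv_trans)

lemma word_equiv_map: "inj_on h (set v) \<Longrightarrow> word_equiv v (map h v)"
  unfolding word_equiv_def supp_def by (intro exI[of _ h]) (simp add: inj_on_imp_bij_betw)

lemma pair_equiv_refl: "pair_equiv a a"
  unfolding pair_equiv_def by (intro exI[of _ id]) auto

lemma pair_equiv_imp_word_equiv:
  assumes "pair_equiv (w1, w2) (v1, v2)"
  shows "word_equiv w1 v1" "word_equiv w2 v2"
proof -
  obtain f where f: "inj_on f (set w1 \<union> set w2)" "map f w1 = v1" "map f w2 = v2"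
    using assms by (auto simp: pair_equiv_def supp_def bij_betw_def)
  show "word_equiv w1 v1" "word_equiv w2 v2"
    using word_equiv_map[of f w1] word_equiv_map[of f w2] f inj_on_subset by auto
qed

lemma pair_equiv_if_word_equiv:
  assumes e1: "word_equiv w1 v1" and e2: "word_equiv w2 v2"
    and ne: "w1 \<noteq> []" "w2 \<noteq> []" and hd: "hd w2 = hd w1" "hd v2 = hd v1"
    and meet: "set w1 \<inter> set w2 = {hd w1}" "set v1 \<inter> set v2 = {hd v1}"
  shows "pair_equiv (w1, w2) (v1, v2)"
proof -
  obtain f1 where f1: "bij_betw f1 (set w1) (set v1)" "map f1 w1 = v1"
    using e1 by (auto simp: word_equiv_def supp_def)
  obtain f2 where f2: "bij_betw f2 (set w2) (set v2)" "map f2 w2 = v2"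
    using e2 by (auto simp: word_equiv_def supp_def)
  have hd_f: "f1 (hd w1) = hd v1" "f2 (hd w1) = hd v1"
    using f1(2) f2(2) ne hd by (metis hd_map)+
  define f where "f x = (if x \<in> set w1 then f1 x else f2 x)" for x
  have "bij_betw f2 (set w2 - {hd w1}) (set v2 - {hd v1})"
    using f2(1) hd_f(2) ne hd meet by (intro bij_betw_DiffI) auto
  then have "bij_betw f (set w1 \<union> (set w2 - {hd w1})) (set v1 \<union> (set v2 - {hd v1}))"
    unfolding f_def using f1(1) meet by (intro bij_betw_disjoint_Un) auto
  moreover have "set w1 \<union> (set w2 - {hd w1}) = set w1 \<union> set w2"
    "set v1 \<union> (set v2 - {hd v1}) = set v1 \<union> set v2"
    using meet by auto
  moreover have "map f w1 = v1" using f1(2) by (auto simp: f_def)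
  moreover have "f x = f2 x" if "x \<in> set w2" for x
  proof (cases "x \<in> set w1")
    case True
    then have "x = hd w1" using that meet(1) by blast
    then show ?thesis using True hd_f by (simp add: f_def)
  qed (simp add: f_def)
  then have "map f w2 = v2" using f2(2) by auto
  ultimately show ?thesis unfolding pair_equiv_def supp_def by auto
qed

lemma good_pair_if_a_set:
  assumes u: "u \<in> a_set k" and w: "w \<in> a_set k" and meet: "set u \<inter> set w = {1}"
  shows "good_pair k (u, w)"
proof -
  have u': "is_word u" "closed_word u" "length u = k + 1" "hd u = 1" "single_loop_word u"
    and w': "is_word w" "closed_word w" "length w = k + 1" "hd w = 1" "single_loop_word w"
    using u w by (simp_all add: a_set_iff)
  have one: "{1} \<in> set (edge_list u)" "{1} \<in> set (edge_list w)"
    using u'(5) w'(5) unfolding single_loop_word_def by (metis count_notin zero_neq_one)+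
  have "u \<in> V k" "w \<in> V k"
    using u' w' one by (auto simp: V_def edges_eq_set_edge_list)
  moreover have "2 \<le> Nedge e u + Nedge e w" if "e \<in> edges u \<union> edges w" for e
  proof (cases "is_loop e")
    case True
    then have "e = {1}" using that u'(5) w'(5) by (auto simp: single_loop_word_def edges_eq_set_edge_list)
    then show ?thesis using u'(5) w'(5) by (simp add: single_loop_word_def Nedge_eq_count_list)
  next
    case False
    then show ?thesis
      using that u'(5) w'(5)
      by (fastforce simp: single_loop_word_def edges_eq_set_edge_list Nedge_eq_count_list)
  qed
  moreover have "card (set u \<union> set w) = k"
    using card_Un_Int[of "set u" "set w"] meet u'(3,5) w'(3,5) by (simp add: single_loop_word_def)
  ultimately show ?thesis
    using one
    by (auto simp: good_pair_def weak_CLT_pair_def edges_pair_def Nedge_pair_def wt_pair_def supp_def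
        edges_eq_set_edge_list)
qed

text \<open>Shifting all letters but \<open>1\<close> of \<open>v\<close> above those of \<open>u\<close> realises any pair of classes.\<close>

lemma exists_good_pair_in_class:
  assumes u: "u \<in> a_set k" and v: "v \<in> a_set k"
  obtains w where "word_equiv v w" "good_pair k (u, w)"
proof -
  define m where "m = Max (set u)"
  define h where "h x = (if x = 1 then 1 else x + m)" for x :: nat
  have pos: "\<forall>x\<in>set v. 0 < x" using v by (simp add: a_set_iff is_word_def)
  have "1 \<in> set u" "1 \<in> set v"
    using u v by (metis a_set_iff closed_word_def hd_in_set)+
  have inj: "inj_on h (set v)" using pos by (auto simp: inj_on_def h_def)
  have "map h v \<in> a_set k"
    using v inj pos by (intro a_set_map) (auto simp: h_def)
  moreover have "set u \<inter> set (map h v) = {1}"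
  proof -
    have "x \<le> m" if "x \<in> set u" for x using that by (simp add: m_def)
    then show ?thesis
      using pos \<open>1 \<in> set u\<close> \<open>1 \<in> set v\<close> by (force simp: h_def)
  qed
  ultimately show thesis
    using word_equiv_map[OF inj] good_pair_if_a_set[OF u] that by blast
qed

lemma good_pair_pair_equiv_iff:
  assumes g: "good_pair k (w1, w2)" "good_pair k (v1, v2)"
  shows "pair_equiv (w1, w2) (v1, v2) \<longleftrightarrow> word_equiv w1 v1 \<and> word_equiv w2 v2"
proof -
  have "w1 \<in> V k" "w2 \<in> V k" "v1 \<in> V k" "v2 \<in> V k" using g by (auto simp: good_pair_def)
  then show ?thesis
    using good_pair_structure(3)[OF g(1)] good_pair_structure(3)[OF g(2)]
      pair_equiv_if_word_equiv pair_equiv_imp_word_equiv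
    by (metis V_memD(2,3))
qed

lemma good_pair_imp_a_set:
  assumes "good_pair k (w1, w2)"
  shows "w1 \<in> a_set k" "w2 \<in> a_set k"
proof -
  have "w1 \<in> V k" "w2 \<in> V k" using assms by (auto simp: good_pair_def)
  then show "w1 \<in> a_set k" "w2 \<in> a_set k"
    using good_pair_structure(1,2)[OF assms] by (auto simp: a_set_iff V_def)
qed

text \<open>Sending a pair to the classes of its two words identifies the representatives with
  ordered pairs of classes of \<open>a_set k\<close>.\<close>

lemma card_representatives:
  assumes R: "R \<subseteq> {a. good_pair k a}" and unique: "\<forall>a. good_pair k a \<longrightarrow> (\<exists>!r\<in>R. pair_equiv a r)"
  shows "card R = a_num k ^ 2"
proof -
  define rel where "rel = {(w, v). word_equiv w v}"
  define Q where "Q = a_set k // rel"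
  define classes where "classes r = (rel `` {fst r}, rel `` {snd r})" for r :: "nat list \<times> nat list"
  have class_eq: "rel `` {x} = rel `` {y} \<longleftrightarrow> word_equiv x y" for x y
    using eq_equiv_class_iff[OF equiv_word_equiv] by (simp add: rel_def)
  have "inj_on classes R"
  proof (rule inj_onI)
    fix r r' assume r: "r \<in> R" "r' \<in> R" "classes r = classes r'"
    obtain w1 w2 v1 v2 where rr: "r = (w1, w2)" "r' = (v1, v2)" by force
    have g: "good_pair k (w1, w2)" "good_pair k (v1, v2)" using R r rr by auto
    moreover have "word_equiv w1 v1" "word_equiv w2 v2"
      using r(3) class_eq by (auto simp: classes_def rr)
    ultimately have "pair_equiv (w1, w2) (v1, v2)" by (simp add: good_pair_pair_equiv_iff)
    then show "r = r'" using unique g(1) pair_equiv_refl r rr by blast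
  qed
  moreover have "classes ` R = Q \<times> Q"
  proof (intro equalityI subsetI)
    fix q assume "q \<in> classes ` R"
    then show "q \<in> Q \<times> Q"
      using R good_pair_imp_a_set by (auto simp: classes_def Q_def quotientI)
  next
    fix q assume "q \<in> Q \<times> Q"
    then obtain u v where uv: "u \<in> a_set k" "v \<in> a_set k" "q = (rel `` {u}, rel `` {v})"
      unfolding Q_def by (auto elim!: quotientE)
    obtain w where w: "word_equiv v w" "good_pair k (u, w)"
      using exists_good_pair_in_class[OF uv(1,2)] by blast
    then obtain r1 r2 where r: "(r1, r2) \<in> R" "pair_equiv (u, w) (r1, r2)"
      using unique by fastforce
    then have "word_equiv u r1" "word_equiv v r2"
      using pair_equiv_imp_word_equiv word_equiv_trans w(1) by blast+
    then have "classes (r1, r2) = q"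
      using uv(3) class_eq word_equiv_sym by (simp add: classes_def)
    then show "q \<in> classes ` R" using r(1) by force
  qed
  ultimately have "bij_betw classes R (Q \<times> Q)" by (simp add: bij_betw_def)
  then show ?thesis
    by (simp add: bij_betw_same_card card_cartesian_product a_num_def Q_def rel_def power2_eq_square)
qed

theorem mainTheorem16:
  fixes M :: "'a measure" and X :: "nat \<Rightarrow> nat \<Rightarrow> 'a \<Rightarrow> real" and k :: nat
  assumes "prob_space M"
    and indep: "prob_space.indep_vars M (\<lambda>_. borel) (\<lambda>(i, j). X i j) {(i, j). 1 \<le> i \<and> i \<le> j}"
    and diag_id: "\<And>i. 1 \<le> i \<Longrightarrow> distr M borel (X i i) = distr M borel (X 1 1)"
    and off_id: "\<And>i j. 1 \<le> i \<Longrightarrow> i < j \<Longrightarrow> distr M borel (X i j) = distr M borel (X 1 2)"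
    and mean0: "\<And>i j. 1 \<le> i \<Longrightarrow> i \<le> j \<Longrightarrow> integral\<^sup>L M (X i j) = 0"
    and var1: "integral\<^sup>L M (\<lambda>\<omega>. (X 1 2 \<omega>)\<^sup>2) = 1"
    and moments: "\<And>i j n. 1 \<le> i \<Longrightarrow> i \<le> j \<Longrightarrow> integrable M (\<lambda>\<omega>. \<bar>X i j \<omega>\<bar> ^ n)"
    and "odd k" and "3 \<le> k"
  shows "(\<forall>w1 w2. good_pair k (w1, w2) \<longrightarrow>
            (Nedge {1} w1 = 1 \<and> wigner_word (check w1) \<and> length (check w1) = k) \<and>
            (Nedge {1} w2 = 1 \<and> wigner_word (check w2) \<and> length (check w2) = k) \<and>
            supp w1 \<inter> supp w2 = {1} \<and>
            integral\<^sup>L M (\<lambda>\<omega>. Tbar M X w1 \<omega> * Tbar M X w2 \<omega>)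
              = integral\<^sup>L M (\<lambda>\<omega>. (X 1 1 \<omega>)\<^sup>2))
       \<and> (\<forall>R. R \<subseteq> {a. good_pair k a} \<and> (\<forall>a. good_pair k a \<longrightarrow> (\<exists>!r\<in>R. pair_equiv a r)) \<longrightarrow>
            (\<Sum>(w1, w2)\<in>R. integral\<^sup>L M (\<lambda>\<omega>. Tbar M X w1 \<omega> * Tbar M X w2 \<omega>))
              = (real (a_num k))\<^sup>2 * integral\<^sup>L M (\<lambda>\<omega>. (X 1 1 \<omega>)\<^sup>2))"
proof -
  interpret wigner_entries M X
    by (intro wigner_entries.intro wigner_entries_axioms.intro) (fact assms(1) indep off_id mean0 var1 moments)+
  have "(Nedge {1} w1 = 1 \<and> wigner_word (check w1) \<and> length (check w1) = k) \<and>
      (Nedge {1} w2 = 1 \<and> wigner_word (check w2) \<and> length (check w2) = k) \<and>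
      supp w1 \<inter> supp w2 = {1}" if g: "good_pair k (w1, w2)" for w1 w2
    using good_pair_imp_a_set[OF g] good_pair_structure(3)[OF g] by (simp add: a_set_def supp_def)
  moreover have "(\<Sum>(w1, w2)\<in>R. integral\<^sup>L M (\<lambda>\<omega>. Tbar M X w1 \<omega> * Tbar M X w2 \<omega>))
      = (real (a_num k))\<^sup>2 * integral\<^sup>L M (\<lambda>\<omega>. (X 1 1 \<omega>)\<^sup>2)"
    if R: "R \<subseteq> {a. good_pair k a}" "\<forall>a. good_pair k a \<longrightarrow> (\<exists>!r\<in>R. pair_equiv a r)" for R
  proof -
    have "(\<Sum>(w1, w2)\<in>R. integral\<^sup>L M (\<lambda>\<omega>. Tbar M X w1 \<omega> * Tbar M X w2 \<omega>))
        = (\<Sum>r\<in>R. integral\<^sup>L M (\<lambda>\<omega>. (X 1 1 \<omega>)\<^sup>2))"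
      using R(1) integral_Tbar_mult_Tbar_good_pair by (intro sum.cong) auto
    then show ?thesis using card_representatives[OF R] by simp
  qed
  ultimately show ?thesis using integral_Tbar_mult_Tbar_good_pair by blast
qed

end
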